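(* Let $(N_n)_{n\in\mathbb{N}}$ be a strictly increasing sequence of natural numbers and let $f_n:\ell_1\to\mathbb{R}$ be defined as below. Then $f_n \geq 0$ for every $n \in \mathbb{N}$ and $f_n \wedge f_l = 0$ for all $n \neq l$.
   Context: Identify $c_0^*=\ell_1$ and write $x^*=(x^*_1,x^*_2,\ldots)$. For $n<m$ let $g_{nm}: \ell_1 \to [0,1]$ be any continuous function such that $g_{nm}(x^* ) = 0$ if $N_m|x_n^*| \leq |x_m^*|$, $g_{nm}(x^* ) = 1$ if $|x_m^*| \leq (N_m-1)|x_n^*|$, and $g_{nm}(x^* )=g_{nm}(x^*/\|x^*\|)$ whenever $x^* \neq 0$. Define $$f_n(x^* ) = \big(|x_n^*|-N_n\max\{|x_m^*| : m<n\}\big)^+ \cdot \prod_{m > n}g_{nm}(x^* ),$$ where $r^+=\max\{r,0\}$ and the max over the empty set is $0$. Order and lattice operations are pointwise. *)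

theory Defs
  imports "HOL-Analysis.Analysis"
begin

text \<open>The space ell_1 = c_0^*, realised as absolutely summable real sequences
  indexed by nat (index 0 plays the role of the first coordinate).\<close>

definition l1 :: "(nat \<Rightarrow> real) set" where
  "l1 = {x. summable (\<lambda>k. \<bar>x k\<bar>)}"

definition l1norm :: "(nat \<Rightarrow> real) \<Rightarrow> real" where
  "l1norm x = (\<Sum>k. \<bar>x k\<bar>)"

definition l1_continuous_on :: "(nat \<Rightarrow> real) set \<Rightarrow> ((nat \<Rightarrow> real) \<Rightarrow> real) \<Rightarrow> bool" where
  "l1_continuous_on S g \<longleftrightarrow>
     (\<forall>x\<in>S. \<forall>e>0. \<exists>d>0. \<forall>y\<in>S. l1norm (\<lambda>k. y k - x k) < d \<longrightarrow> \<bar>g y - g x\<bar> < e)"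

text \<open>max over the empty set is 0\<close>
definition prevmax :: "(nat \<Rightarrow> real) \<Rightarrow> nat \<Rightarrow> real" where
  "prevmax x n = (if n = 0 then 0 else Max ((\<lambda>m. \<bar>x m\<bar>) ` {..<n}))"

definition fdef :: "(nat \<Rightarrow> nat) \<Rightarrow> (nat \<Rightarrow> nat \<Rightarrow> (nat \<Rightarrow> real) \<Rightarrow> real)
                     \<Rightarrow> nat \<Rightarrow> (nat \<Rightarrow> real) \<Rightarrow> real" where
  "fdef N g n x = max (\<bar>x n\<bar> - real (N n) * prevmax x n) 0 *
                  prodinf (\<lambda>k. g n (n + 1 + k) x)"

end

theory Submission
  imports Defs
begin

text \<open>Since x is summable, x_m tends to 0, while N_m \<ge> m; so if x_n \<noteq> 0, the condition
  |x_m| \<le> (N_m - 1) |x_n| holds for all large m. Hence almost all factors g_nm(x) equal 1, and the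
  infinite product in f_n(x) is a finite product of numbers in [0,1], which gives f_n \<ge> 0.
  For disjointness let n < l. If f_l(x) > 0, then |x_l| > N_l max {|x_m| : m < l} \<ge> N_l |x_n|,
  so g_nl(x) = 0 is one of the finitely many factors of f_n(x), and f_n(x) = 0.\<close>

lemma prevmax_nonneg: "0 \<le> prevmax x n"
proof (cases "n = 0")
  case False
  then have "\<bar>x 0\<bar> \<le> Max ((\<lambda>m. \<bar>x m\<bar>) ` {..<n})"
    by (intro Max_ge) auto
  then have "0 \<le> Max ((\<lambda>m. \<bar>x m\<bar>) ` {..<n})"
    by (meson abs_ge_zero order_trans)
  with False show ?thesis by (simp add: prevmax_def)
qed (simp add: prevmax_def)

lemma abs_le_prevmax: "m < n \<Longrightarrow> \<bar>x m\<bar> \<le> prevmax x n"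
  unfolding prevmax_def by (auto intro: Max_ge)

lemma l1_LIMSEQ_zero: "x \<in> l1 \<Longrightarrow> x \<longlonglongrightarrow> 0"
  using summable_LIMSEQ_zero[of "\<lambda>k. \<bar>x k\<bar>"] unfolding l1_def tendsto_rabs_zero_iff by simp

lemma prodinf_eq_prod_lessThan_if_eventually_one:
  fixes f :: "nat \<Rightarrow> 'a :: real_normed_field"
  assumes "eventually (\<lambda>k. f k = 1) sequentially"
  shows "\<exists>K\<ge>M. prodinf f = (\<Prod>k<K. f k)"
proof -
  obtain K0 where K0: "\<And>k. k \<ge> K0 \<Longrightarrow> f k = 1"
    using assms by (auto simp: eventually_sequentially)
  have "prodinf f = (\<Prod>k<K0 + M. f k)"
    by (rule prodinf_finite) (auto intro: K0)
  then show ?thesis by (intro exI[of _ "K0 + M"]) simp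
qed

lemma fdef_eq_0_if_coordinate_0: "x n = 0 \<Longrightarrow> fdef N g n x = 0"
  using prevmax_nonneg[of x n] by (simp add: fdef_def mult_nonneg_nonneg)

lemma prevmax_less_if_fdef_neq_0: "fdef N g n x \<noteq> 0 \<Longrightarrow> real (N n) * prevmax x n < \<bar>x n\<bar>"
proof -
  assume "fdef N g n x \<noteq> 0"
  then have "max (\<bar>x n\<bar> - real (N n) * prevmax x n) 0 \<noteq> 0"
    unfolding fdef_def by auto
  then show ?thesis by (simp add: max_def split: if_splits)
qed

lemma eventually_g_one:
  fixes g :: "nat \<Rightarrow> nat \<Rightarrow> (nat \<Rightarrow> real) \<Rightarrow> real"
  assumes N_mono: "strict_mono N"
    and g_one: "\<And>m. n < m \<Longrightarrow> \<bar>x m\<bar> \<le> (real (N m) - 1) * \<bar>x n\<bar> \<Longrightarrow> g n m x = 1"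
    and x: "x \<in> l1" and xn: "x n \<noteq> 0"
  shows "eventually (\<lambda>k. g n (n + 1 + k) x = 1) sequentially"
proof -
  have "(\<lambda>m. \<bar>x m\<bar>) \<longlonglongrightarrow> 0"
    using l1_LIMSEQ_zero[OF x] by (rule tendsto_rabs_zero)
  then have "eventually (\<lambda>m. \<bar>x m\<bar> < \<bar>x n\<bar>) sequentially"
    using xn by (intro order_tendstoD(2)) auto
  then have "eventually (\<lambda>m. \<bar>x m\<bar> \<le> \<bar>x n\<bar>) sequentially"
    by (rule eventually_mono) simp
  moreover have "eventually (\<lambda>m. 2 \<le> N m) sequentially"
    using eventually_ge_at_top[of 2]
    by eventually_elim (meson order_trans strict_mono_imp_increasing[OF N_mono])
  moreover have "eventually (\<lambda>m. n < m) sequentially"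
    by (rule eventually_gt_at_top)
  ultimately have "eventually (\<lambda>m. g n m x = 1) sequentially"
  proof eventually_elim
    case (elim m)
    then have "1 * \<bar>x n\<bar> \<le> (real (N m) - 1) * \<bar>x n\<bar>"
      by (intro mult_right_mono) auto
    with elim show ?case by (simp add: g_one)
  qed
  then show ?thesis
    using eventually_sequentially_seg[of "\<lambda>m. g n m x = 1" "n + 1"] by (simp only: add.commute)
qed

lemma prodinf_g_eq_prod_lessThan:
  fixes g :: "nat \<Rightarrow> nat \<Rightarrow> (nat \<Rightarrow> real) \<Rightarrow> real"
  assumes N_mono: "strict_mono N"
    and g_one: "\<And>m. n < m \<Longrightarrow> \<bar>x m\<bar> \<le> (real (N m) - 1) * \<bar>x n\<bar> \<Longrightarrow> g n m x = 1"
    and x: "x \<in> l1" and xn: "x n \<noteq> 0"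
  shows "\<exists>K\<ge>M. prodinf (\<lambda>k. g n (n + 1 + k) x) = (\<Prod>k<K. g n (n + 1 + k) x)"
proof -
  have "eventually (\<lambda>k. g n (n + 1 + k) x = 1) sequentially"
    using N_mono g_one x xn by (rule eventually_g_one)
  then show ?thesis
    by (rule prodinf_eq_prod_lessThan_if_eventually_one[where f = "\<lambda>k. g n (n + 1 + k) x"])
qed

lemma fdef_nonneg:
  assumes N_mono: "strict_mono N"
    and g_range: "\<And>m. n < m \<Longrightarrow> 0 \<le> g n m x"
    and g_one: "\<And>m. x n \<noteq> 0 \<Longrightarrow> n < m \<Longrightarrow> \<bar>x m\<bar> \<le> (real (N m) - 1) * \<bar>x n\<bar> \<Longrightarrow> g n m x = 1"
    and x: "x \<in> l1"
  shows "0 \<le> fdef N g n x"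
proof (cases "x n = 0")
  case False
  have "\<exists>K\<ge>0. prodinf (\<lambda>k. g n (n + 1 + k) x) = (\<Prod>k<K. g n (n + 1 + k) x)"
    using N_mono g_one[OF False] x False by (rule prodinf_g_eq_prod_lessThan)
  then obtain K where "prodinf (\<lambda>k. g n (n + 1 + k) x) = (\<Prod>k<K. g n (n + 1 + k) x)"
    by blast
  moreover have "0 \<le> (\<Prod>k<K. g n (n + 1 + k) x)"
    by (intro prod_nonneg) (simp add: g_range)
  ultimately show ?thesis by (simp add: fdef_def)
qed (simp add: fdef_eq_0_if_coordinate_0)

lemma fdef_eq_0_if_later_fdef_neq_0:
  assumes N_mono: "strict_mono N"
    and g_one: "\<And>m. x n \<noteq> 0 \<Longrightarrow> n < m \<Longrightarrow> \<bar>x m\<bar> \<le> (real (N m) - 1) * \<bar>x n\<bar> \<Longrightarrow> g n m x = 1"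
    and g_zero: "x n \<noteq> 0 \<Longrightarrow> real (N l) * \<bar>x n\<bar> \<le> \<bar>x l\<bar> \<Longrightarrow> g n l x = 0"
    and x: "x \<in> l1" and "n < l"
    and fl: "fdef N g l x \<noteq> 0"
  shows "fdef N g n x = 0"
proof (cases "x n = 0")
  case False
  have "real (N l) * \<bar>x n\<bar> \<le> real (N l) * prevmax x l"
    using abs_le_prevmax[OF \<open>n < l\<close>] by (simp add: mult_left_mono)
  with prevmax_less_if_fdef_neq_0[OF fl] have "g n l x = 0"
    using g_zero False by simp
  have "\<exists>K\<ge>l. prodinf (\<lambda>k. g n (n + 1 + k) x) = (\<Prod>k<K. g n (n + 1 + k) x)"
    using N_mono g_one[OF False] x False by (rule prodinf_g_eq_prod_lessThan)
  then obtain K where "K \<ge> l" and K: "prodinf (\<lambda>k. g n (n + 1 + k) x) = (\<Prod>k<K. g n (n + 1 + k) x)"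
    by blast
  have "(\<Prod>k<K. g n (n + 1 + k) x) = 0"
  proof (rule prod_zero)
    show "\<exists>k\<in>{..<K}. g n (n + 1 + k) x = 0"
      using \<open>g n l x = 0\<close> \<open>n < l\<close> \<open>K \<ge> l\<close> by (intro bexI[of _ "l - (n + 1)"]) auto
  qed simp
  then show ?thesis unfolding fdef_def K by simp
qed (simp add: fdef_eq_0_if_coordinate_0)

theorem mainTheorem7:
  fixes N :: "nat \<Rightarrow> nat"
    and g :: "nat \<Rightarrow> nat \<Rightarrow> (nat \<Rightarrow> real) \<Rightarrow> real"
  assumes N_mono: "strict_mono N"
    and g_range: "\<And>n m x. n < m \<Longrightarrow> x \<in> l1 \<Longrightarrow> 0 \<le> g n m x \<and> g n m x \<le> 1"
    and g_cont: "\<And>n m. n < m \<Longrightarrow> l1_continuous_on {x \<in> l1. x n \<noteq> 0} (g n m)"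
    and g_zero: "\<And>n m x. n < m \<Longrightarrow> x \<in> l1 \<Longrightarrow> x n \<noteq> 0 \<Longrightarrow>
                   real (N m) * \<bar>x n\<bar> \<le> \<bar>x m\<bar> \<Longrightarrow> g n m x = 0"
    and g_one: "\<And>n m x. n < m \<Longrightarrow> x \<in> l1 \<Longrightarrow> x n \<noteq> 0 \<Longrightarrow>
                   \<bar>x m\<bar> \<le> (real (N m) - 1) * \<bar>x n\<bar> \<Longrightarrow> g n m x = 1"
    and g_hom: "\<And>n m x. n < m \<Longrightarrow> x \<in> l1 \<Longrightarrow> (\<exists>k. x k \<noteq> 0) \<Longrightarrow>
                   g n m x = g n m (\<lambda>k. x k / l1norm x)"
  shows "(\<forall>n. \<forall>x\<in>l1. 0 \<le> fdef N g n x) \<and>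
         (\<forall>n l. n \<noteq> l \<longrightarrow> (\<forall>x\<in>l1. min (fdef N g n x) (fdef N g l x) = 0))"
proof -
  have nonneg: "0 \<le> fdef N g n x" if "x \<in> l1" for n x
    using that by (intro fdef_nonneg[OF N_mono]) (simp_all add: g_range g_one)
  have disjoint: "fdef N g n x = 0" if "x \<in> l1" "n < l" "fdef N g l x \<noteq> 0" for n l x
    using that by (intro fdef_eq_0_if_later_fdef_neq_0[OF N_mono]) (simp_all add: g_one g_zero)
  show ?thesis
  proof (intro conjI allI impI ballI)
    fix n l :: nat and x assume "n \<noteq> l" "x \<in> l1"
    then have "fdef N g n x = 0 \<or> fdef N g l x = 0"
      using disjoint[of x n l] disjoint[of x l n] by (cases "n < l") auto
    then show "min (fdef N g n x) (fdef N g l x) = 0"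
      using nonneg[OF \<open>x \<in> l1\<close>, of n] nonneg[OF \<open>x \<in> l1\<close>, of l] by auto
  qed (rule nonneg)
qed

end
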